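(* Let $d\ge 1$ and let $B$ be a $d\times d$ integral matrix with $|\det(B)|=2$. Then $B$ is integrally similar to a $d\times d$ integral matrix $A$ with the following properties: (1) $A\mathbb{Z}^d=A^\tau\mathbb{Z}^d$; (2) there exists $\vec{\ell}_A\in\mathbb{Z}^d$ such that $\mathbb{Z}^d=(\vec{\ell}_A+A\mathbb{Z}^d)\,\dot\cup\, A\mathbb{Z}^d$ (disjoint union); (3) there exists $\vec{q}_A\in\mathbb{Z}^d$ such that $\vec{q}_A\circ A\mathbb{Z}^d\subseteq 2\mathbb{Z}$ and $\vec{q}_A\circ(\vec{\ell}_A+A\mathbb{Z}^d)\subseteq 2\mathbb{Z}+1$; (4) for every $\vec m\in A\mathbb{Z}^d$ and every $\vec n\in\mathbb{Z}^d$, $\mathbb{Z}^d=(\vec n-A\mathbb{Z}^d)\,\dot\cup\,(\vec{\ell}_A-\vec m-\vec n+A\mathbb{Z}^d)$; (5) for every $\vec m\in\vec{\ell}_A+A\mathbb{Z}^d$ and every $\vec n\in\mathbb{Z}^d$, $\vec n-A\mathbb{Z}^d=\vec{\ell}_A-\vec m-\vec n+A\mathbb{Z}^d$.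
   Context: $A^\tau$ denotes the transpose of $A$. For $\vec x,\vec y\in\mathbb{C}^d$, $\vec x\circ\vec y=\sum_{j=1}^d x_j\overline{y_j}$; for a set $X$ of vectors, $\vec q\circ X=\{\vec q\circ\vec x:\vec x\in X\}$. An integral matrix $B$ is integrally similar to an integral matrix $C$ if $C=SBS^{-1}$ for some integral matrix $S$ whose inverse $S^{-1}$ is also integral. $\dot\cup$ denotes disjoint union. *)

theory Defs
  imports "HOL-Analysis.Analysis"
begin

text \<open>d x d integral matrices are \<open>int ^ 'n ^ 'n\<close> with \<open>d = CARD('n)\<close>;
  integral vectors in Z^d are \<open>int ^ 'n\<close>.\<close>

definition int_lattice :: "int ^ 'n ^ 'n \<Rightarrow> (int ^ 'n) set" where
  "int_lattice A = range (\<lambda>x. A *v x)"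

definition int_circ :: "int ^ 'n \<Rightarrow> int ^ 'n \<Rightarrow> int" where
  "int_circ x y = (\<Sum>j\<in>UNIV. x $ j * y $ j)"   \<comment> \<open>x \<circ> y for integer vectors (conjugation is trivial)\<close>

definition int_similar :: "int ^ 'n ^ 'n \<Rightarrow> int ^ 'n ^ 'n \<Rightarrow> bool" where
  "int_similar B C \<longleftrightarrow> (\<exists>S Sinv :: int ^ 'n ^ 'n.
      S ** Sinv = mat 1 \<and> Sinv ** S = mat 1 \<and> C = S ** B ** Sinv)"

end

theory Submission
  imports Defs
begin

text \<open>Work modulo 2. Conjugation by an integral transvection \<open>I + a b\<^sup>T\<close> (with \<open>b \<circ> a = 0\<close>)
  transports vectors \<open>u\<close>, \<open>v\<close> with \<open>B u\<close> and \<open>B\<^sup>T v\<close> even; since \<open>|det B| = 2\<close> such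
  vectors exist with an odd entry, and a few transvections make them equal to one vector \<open>w\<close>
  with \<open>w\<^sub>p = 1\<close>. Then \<open>A \<int>\<^sup>d\<close> and \<open>A\<^sup>T \<int>\<^sup>d\<close> lie in \<open>{y. w \<circ> y even}\<close>, and as
  \<open>|det A| = 2\<close> each of them has index 2 (after a unimodular change of basis \<open>A\<close> is a
  unimodular matrix times \<open>diag(1,\<dots>,2,\<dots>,1)\<close>), so both equal it. With \<open>l = e\<^sub>p\<close> and
  \<open>q = w\<close>, properties (2)--(5) are statements about the two cosets of this index-2 subgroup.\<close>

lemma det_map_matrix_of_int:
  fixes M :: "int ^ 'n ^ 'n"
  shows "det (map_matrix of_int M) = (of_int (det M) :: 'a :: comm_ring_1)"
  unfolding det_def by (simp add: of_int_sum of_int_mult of_int_prod)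

lemma map_matrix_of_int_mult:
  fixes A :: "int ^ 'n ^ 'm" and B :: "int ^ 'k ^ 'n"
  shows "map_matrix of_int (A ** B) = (map_matrix of_int A ** map_matrix of_int B :: 'a :: ring_1 ^ 'k ^ 'm)"
  by (simp add: vec_eq_iff matrix_matrix_mult_def of_int_sum)

lemma map_matrix_of_int_mat:
  "map_matrix of_int (mat c :: int ^ 'n ^ 'n) = (mat (of_int c) :: 'a :: ring_1 ^ 'n ^ 'n)"
  by (simp add: vec_eq_iff mat_def)

lemma map_matrix_of_int_inject:
  fixes A B :: "int ^ 'n ^ 'm"
  shows "(map_matrix of_int A :: 'a :: ring_char_0 ^ 'n ^ 'm) = map_matrix of_int B \<longleftrightarrow> A = B"
  by (simp add: vec_eq_iff)

lemma matrix_vector_mult_axis: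
  fixes M :: "'a :: semiring_1 ^ 'n ^ 'm"
  shows "M *v axis j 1 = column j M"
  by (simp add: vec_eq_iff matrix_vector_mult_def axis_def column_def if_distrib cong: if_cong)

lemma int_matrix_left_right_inverse:
  fixes A X :: "int ^ 'n ^ 'n"
  assumes "A ** X = mat 1"
  shows "X ** A = mat 1"
proof -
  have "map_matrix real_of_int A ** map_matrix of_int X = mat 1"
    using assms by (metis map_matrix_of_int_mult map_matrix_of_int_mat of_int_1)
  then have "map_matrix real_of_int X ** map_matrix of_int A = mat 1"
    by (rule matrix_left_right_inverse1)
  then show ?thesis
    by (metis map_matrix_of_int_mult map_matrix_of_int_mat map_matrix_of_int_inject of_int_1)
qed

lemma int_matrix_adjugate:
  fixes A :: "int ^ 'n ^ 'n"
  shows "\<exists>X. A ** X = mat (det A)"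
proof (cases "det A = 0")
  case True
  then show ?thesis by (intro exI[of _ 0]) simp
next
  case False
  define Ar where "Ar = (map_matrix of_int A :: real ^ 'n ^ 'n)"
  have "det Ar \<noteq> 0"
    using False by (simp add: Ar_def det_map_matrix_of_int)
  then obtain Ai where Ai: "Ar ** Ai = mat 1"
    using invertible_det_nz[of Ar] unfolding invertible_def by blast
  \<comment> \<open>Cramer's rule: replacing column \<open>k\<close> of \<open>A\<close> by the unit vector \<open>e\<^sub>j\<close> gives a
      determinant equal to \<open>det A\<close> times the \<open>(k, j)\<close> entry of \<open>A\<^sup>-\<^sup>1\<close>.\<close>
  define X :: "int ^ 'n ^ 'n" where
    "X = (\<chi> k j. det (\<chi> i l. if l = k then axis j 1 $ i else A $ i $ l))"
  have X: "real_of_int (X $ k $ j) = Ai $ k $ j * det Ar" for k j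
  proof -
    define y where "y = Ai *v axis j 1"
    have "Ar *v y = axis j 1"
      using Ai by (simp add: y_def matrix_vector_mul_assoc)
    then have "real_of_int (X $ k $ j) = det (\<chi> i l. if l = k then (Ar *v y) $ i else Ar $ i $ l)"
      by (simp add: X_def Ar_def det_map_matrix_of_int[symmetric] map_matrix_def
          if_distrib[of real_of_int] axis_def cong: if_cong)
    also have "\<dots> = y $ k * det Ar"
      by (rule cramer_lemma)
    finally show ?thesis
      by (simp add: y_def matrix_vector_mult_axis column_def)
  qed
  have "map_matrix real_of_int (A ** X) = map_matrix of_int (mat (det A))"
  proof -
    have "real_of_int ((A ** X) $ i $ j) = (Ar ** Ai) $ i $ j * det Ar" for i j
      by (simp add: matrix_matrix_mult_def X Ar_def sum_distrib_right mult.assoc)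
    then show ?thesis
      using Ai by (simp add: vec_eq_iff mat_def Ar_def det_map_matrix_of_int)
  qed
  then show ?thesis
    by (auto simp: map_matrix_of_int_inject)
qed

lemma int_matrix_unimodular_inverse:
  fixes A :: "int ^ 'n ^ 'n"
  assumes "\<bar>det A\<bar> = 1"
  shows "\<exists>X. A ** X = mat 1 \<and> X ** A = mat 1"
proof -
  obtain X where X: "A ** X = mat (det A)"
    using int_matrix_adjugate by blast
  have "(A ** (\<chi> i j. det A * X $ i $ j)) $ i $ j = det A * (A ** X) $ i $ j" for i j
    unfolding matrix_matrix_mult_def by (simp add: sum_distrib_left mult_ac)
  then have "A ** (\<chi> i j. det A * X $ i $ j) = mat (det A * det A)"
    using X by (simp add: vec_eq_iff mat_def)
  also have "det A * det A = 1"
    using assms abs_mult_self_eq[of "det A"] by simp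
  finally show ?thesis
    using int_matrix_left_right_inverse by blast
qed

lemma det_mat: "det (mat c :: 'a :: comm_ring_1 ^ 'n ^ 'n) = c ^ CARD('n)"
  by (subst det_diagonal) (auto simp: mat_def)

definition even_vec :: "int ^ 'n \<Rightarrow> bool" where
  "even_vec x \<longleftrightarrow> (\<forall>i. even (x $ i))"

lemma even_vec_matrix_vector_mult: "even_vec x \<Longrightarrow> even_vec (M *v x)"
  unfolding even_vec_def matrix_vector_mult_def by (auto intro!: dvd_sum)

lemma even_vec_matrix_vector_mult_cong:
  assumes "even_vec (M *v u)" and "even_vec (u - u')"
  shows "even_vec (M *v u')"
proof -
  have "M *v u' = M *v u - M *v (u - u')"
    by (simp add: matrix_vector_mult_diff_distrib)
  then show ?thesis
    using assms even_vec_matrix_vector_mult[OF assms(2), of M] by (simp add: even_vec_def)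
qed

lemma abs_det_two_mod2_kernel:
  fixes B :: "int ^ 'n ^ 'n"
  assumes "\<bar>det B\<bar> = 2"
  shows "\<exists>u p. even_vec (B *v u) \<and> odd (u $ p)"
proof -
  obtain X where BX: "B ** X = mat (det B)"
    using int_matrix_adjugate by blast
  have even_det: "even (det B)"
    using assms by (metis abs_dvd_iff dvd_refl)
  \<comment> \<open>If the adjugate were \<open>2 Y\<close>, then \<open>det B * det Y = (\<plusminus>1)\<^sup>d\<close> would be a unit.\<close>
  have "\<exists>p j. odd (X $ p $ j)"
  proof (rule ccontr)
    assume all_even: "\<not> ?thesis"
    define Y where "Y = (\<chi> i j. X $ i $ j div 2)"
    have "X $ i $ j = 2 * Y $ i $ j" for i j
      using all_even by (simp add: Y_def)
    then have "2 * (B ** Y) $ i $ j = (B ** X) $ i $ j" for i j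
      by (simp add: matrix_matrix_mult_def sum_distrib_left mult.left_commute)
    then have "2 * (B ** Y) $ i $ j = 2 * mat (det B div 2) $ i $ j" for i j
      using BX even_det by (simp add: mat_def)
    then have "B ** Y = mat (det B div 2)"
      by (simp add: vec_eq_iff)
    then have "det B dvd (det B div 2) ^ CARD('n)"
      by (metis det_mat det_mul dvd_triv_left)
    moreover have "\<bar>det B div 2\<bar> = 1"
      using assms by (cases "det B \<ge> 0") auto
    ultimately have "det B dvd 1"
      by (metis dvd_abs_iff power_abs power_one)
    then show False
      using assms by simp
  qed
  then obtain p j where "odd (X $ p $ j)"
    by blast
  moreover have "B *v column j X = column j (mat (det B))"
    using BX by (metis matrix_vector_mul_assoc matrix_vector_mult_axis)
  then have "even_vec (B *v column j X)"
    using even_det by (simp add: even_vec_def column_def mat_def)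
  ultimately show ?thesis
    by (metis column_def vec_lambda_beta)
qed

lemma int_circ_commute: "int_circ x y = int_circ y x"
  unfolding int_circ_def by (simp add: mult.commute)

lemma int_circ_add_right: "int_circ r (x + y) = int_circ r x + int_circ r y"
  unfolding int_circ_def by (simp add: distrib_left sum.distrib)

lemma int_circ_diff_right: "int_circ r (x - y) = int_circ r x - int_circ r y"
  unfolding int_circ_def by (simp add: right_diff_distrib sum_subtractf)

lemma int_circ_minus_left: "int_circ (- x) y = - int_circ x y"
  unfolding int_circ_def by (simp add: sum_negf)

lemma int_circ_scale_right: "int_circ r (c *s x) = c * int_circ r x"
  unfolding int_circ_def by (simp add: sum_distrib_left mult_ac)

lemma int_circ_axis_right: "int_circ r (axis k 1) = r $ k"
  unfolding int_circ_def axis_def by (simp add: if_distrib cong: if_cong)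

lemma int_circ_axis_left: "int_circ (axis k 1) r = r $ k"
  by (simp add: int_circ_commute int_circ_axis_right)

lemma int_circ_matrix_vector_mult: "int_circ w (A *v x) = int_circ (transpose A *v w) x"
proof -
  have "int_circ w (A *v x) = (\<Sum>i\<in>UNIV. \<Sum>j\<in>UNIV. w $ i * A $ i $ j * x $ j)"
    unfolding int_circ_def matrix_vector_mult_def by (simp add: sum_distrib_left mult.assoc)
  also have "\<dots> = (\<Sum>j\<in>UNIV. \<Sum>i\<in>UNIV. w $ i * A $ i $ j * x $ j)"
    by (rule sum.swap)
  also have "\<dots> = int_circ (transpose A *v w) x"
    unfolding int_circ_def matrix_vector_mult_def transpose_def
    by (simp add: sum_distrib_left mult_ac)
  finally show ?thesis .
qed

lemma even_vec_int_circ: "even_vec z \<Longrightarrow> even (int_circ z x)"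
  unfolding even_vec_def int_circ_def by (auto intro!: dvd_sum)

definition transvection :: "int ^ 'n \<Rightarrow> int ^ 'n \<Rightarrow> int ^ 'n ^ 'n" where
  "transvection a b = (\<chi> i j. (if i = j then 1 else 0) + a $ i * b $ j)"

lemma transvection_mult_vector: "transvection a b *v u = u + int_circ b u *s a"
proof -
  have "transvection a b = mat 1 + (\<chi> i j. a $ i * b $ j)"
    by (simp add: vec_eq_iff transvection_def mat_def)
  moreover have "(\<chi> i j. a $ i * b $ j) *v u = int_circ b u *s a"
    by (simp add: vec_eq_iff matrix_vector_mult_def int_circ_def sum_distrib_left mult_ac)
  ultimately show ?thesis
    by (simp add: matrix_vector_mult_add_rdistrib)
qed

lemma transpose_transvection: "transpose (transvection a b) = transvection b a"
  by (simp add: vec_eq_iff transvection_def transpose_def mult.commute eq_commute)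

lemma transvection_inverse:
  assumes "int_circ b a = 0"
  shows "transvection a b ** transvection (- a) b = mat 1"
  unfolding matrix_eq
  by (simp add: matrix_vector_mul_assoc[symmetric] transvection_mult_vector
      int_circ_add_right int_circ_diff_right int_circ_scale_right assms)

lemma int_similar_det: "int_similar B A \<Longrightarrow> det A = det B"
  unfolding int_similar_def by (metis det_I det_mul mult.commute mult.left_commute mult_1_right)

lemma int_similar_conj:
  assumes "S ** T = mat 1"
  shows "int_similar B (S ** B ** T)"
  using assms int_matrix_left_right_inverse unfolding int_similar_def by blast

lemma int_similar_trans:
  assumes "int_similar B A'" and "int_similar A' A"
  shows "int_similar B A"
proof -
  obtain S T where "S ** T = mat 1" and "A' = S ** B ** T"
    using assms(1) unfolding int_similar_def by blast
  moreover obtain S' T' where "S' ** T' = mat 1" and "A = S' ** A' ** T'"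
    using assms(2) unfolding int_similar_def by blast
  ultimately have "(S' ** S) ** (T ** T') = mat 1" and "A = (S' ** S) ** B ** (T ** T')"
    by (metis matrix_mul_assoc matrix_mul_rid)+
  then show ?thesis
    using int_similar_conj by metis
qed

lemma even_vec_conj_kernel:
  assumes "T ** S = mat 1" and "even_vec (B *v u)"
  shows "even_vec ((S ** B ** T) *v (S *v u))"
proof -
  have "(S ** B ** T) *v (S *v u) = S *v (B *v u)"
    using assms(1) by (simp add: matrix_vector_mul_assoc flip: matrix_mul_assoc)
  then show ?thesis
    using even_vec_matrix_vector_mult[OF assms(2)] by simp
qed

lemma transvection_conj_mod2_kernels:
  assumes "int_circ b a = 0" and "even_vec (B *v u)" and "even_vec (transpose B *v v)"
  shows "\<exists>A. int_similar B A \<and> even_vec (A *v (u + int_circ b u *s a))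
    \<and> even_vec (transpose A *v (v - int_circ a v *s b))"
proof -
  define S where "S = transvection a b"
  define T where "T = transvection (- a) b"
  have ST: "S ** T = mat 1"
    unfolding S_def T_def using assms(1) by (rule transvection_inverse)
  then have TS: "T ** S = mat 1"
    by (rule int_matrix_left_right_inverse)
  have "transpose S ** transpose T = mat 1"
    by (metis TS matrix_transpose_mul transpose_mat)
  then have "even_vec ((transpose T ** transpose B ** transpose S) *v (transpose T *v v))"
    using assms(3) by (rule even_vec_conj_kernel)
  moreover have "transpose (S ** B ** T) = transpose T ** transpose B ** transpose S"
    by (simp add: matrix_transpose_mul matrix_mul_assoc)
  moreover have "even_vec ((S ** B ** T) *v (S *v u))"
    using TS assms(2) by (rule even_vec_conj_kernel)
  moreover have "S *v u = u + int_circ b u *s a"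
    by (simp add: S_def transvection_mult_vector)
  moreover have "transpose T *v v = v - int_circ a v *s b"
    by (simp add: T_def transpose_transvection transvection_mult_vector
        int_circ_minus_left int_circ_commute[of v a] vector_smult_lneg del: transpose_matrix_vector)
  ultimately show ?thesis
    using int_similar_conj[OF ST, of B] by metis
qed

lemma similar_mod2_kernel_axis:
  fixes B :: "int ^ 'n ^ 'n"
  assumes "\<bar>det B\<bar> = 2"
  shows "\<exists>A p. int_similar B A \<and> even_vec (A *v axis p 1)"
proof -
  obtain u p where Bu: "even_vec (B *v u)" and up: "odd (u $ p)"
    using abs_det_two_mod2_kernel[OF assms] by blast
  define a :: "int ^ 'n" where "a = (\<chi> i. if i = p then 0 else - u $ i)"
  have "int_circ (axis p 1) a = 0"
    by (simp add: int_circ_axis_left a_def)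
  moreover have "even_vec (transpose B *v 0)"
    by (simp add: even_vec_def)
  ultimately obtain A where "int_similar B A" and "even_vec (A *v (u + u $ p *s a))"
    using transvection_conj_mod2_kernels Bu by (metis int_circ_axis_left)
  moreover have "even_vec ((u + u $ p *s a) - axis p 1)"
    using up by (auto simp: even_vec_def a_def axis_def algebra_simps)
  ultimately show ?thesis
    using even_vec_matrix_vector_mult_cong by blast
qed

lemma similar_mod2_kernel_cokernel_axes:
  fixes A :: "int ^ 'n ^ 'n"
  assumes Ap: "even_vec (A *v axis p 1)" and Av: "even_vec (transpose A *v v)"
    and vr: "odd (v $ r)" and "r = p \<or> even (v $ p)"
  shows "\<exists>A'. int_similar A A' \<and> even_vec (A' *v axis p 1) \<and> even_vec (transpose A' *v axis r 1)"
proof -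
  define b :: "int ^ 'n" where "b = (\<chi> i. if i = r then 0 else v $ i)"
  have "int_circ b (axis r 1) = 0"
    by (simp add: int_circ_axis_right b_def)
  then obtain A' where "int_similar A A'"
    and "even_vec (A' *v (axis p 1 + b $ p *s axis r 1))"
    and "even_vec (transpose A' *v (v - v $ r *s b))"
    using transvection_conj_mod2_kernels[OF _ Ap Av]
    by (metis int_circ_axis_left int_circ_axis_right)
  moreover have "even_vec ((axis p 1 + b $ p *s axis r 1) - axis p 1)"
    using assms(4) by (auto simp: even_vec_def b_def axis_def)
  moreover have "even_vec ((v - v $ r *s b) - axis r 1)"
    using vr by (auto simp: even_vec_def b_def axis_def algebra_simps)
  ultimately show ?thesis
    using even_vec_matrix_vector_mult_cong by blast
qed

lemma similar_mod2_kernel_merge_axes: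
  fixes A :: "int ^ 'n ^ 'n"
  assumes "r \<noteq> p" and Ap: "even_vec (A *v axis p 1)" and Ar: "even_vec (transpose A *v axis r 1)"
  shows "\<exists>A'. int_similar A A' \<and> even_vec (A' *v (axis p 1 + axis r 1))
    \<and> even_vec (transpose A' *v (axis p 1 + axis r 1))"
proof -
  have "int_circ (axis p 1) (axis r 1) = (0 :: int)"
    unfolding int_circ_axis_right using assms(1) by (simp add: axis_def)
  from transvection_conj_mod2_kernels[OF this Ap Ar]
  obtain A' where "int_similar A A'"
    and "even_vec (A' *v (axis p 1 + axis r 1))"
    and "even_vec (transpose A' *v (axis r 1 - axis p 1))"
    by (auto simp: int_circ_axis_right simp del: transpose_matrix_vector)
  moreover have "even_vec ((axis r 1 - axis p 1) - (axis p 1 + axis r 1 :: int ^ 'n))"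
    by (simp add: even_vec_def axis_def)
  ultimately show ?thesis
    using even_vec_matrix_vector_mult_cong by blast
qed

lemma similar_common_mod2_kernel:
  fixes B :: "int ^ 'n ^ 'n"
  assumes "\<bar>det B\<bar> = 2"
  shows "\<exists>A w p. int_similar B A \<and> w $ p = 1 \<and> even_vec (A *v w) \<and> even_vec (transpose A *v w)"
proof -
  obtain A1 p where B_A1: "int_similar B A1" and A1p: "even_vec (A1 *v axis p 1)"
    using similar_mod2_kernel_axis[OF assms] by blast
  have "\<bar>det (transpose A1)\<bar> = 2"
    using assms int_similar_det[OF B_A1] by simp
  then obtain v r0 where A1v: "even_vec (transpose A1 *v v)" and "odd (v $ r0)"
    using abs_det_two_mod2_kernel by blast
  define r where "r = (if odd (v $ p) then p else r0)"
  have "odd (v $ r)" and "r = p \<or> even (v $ p)"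
    using \<open>odd (v $ r0)\<close> by (auto simp: r_def)
  then obtain A2 where A1_A2: "int_similar A1 A2"
    and A2p: "even_vec (A2 *v axis p 1)" and A2r: "even_vec (transpose A2 *v axis r 1)"
    using similar_mod2_kernel_cokernel_axes[OF A1p A1v] by blast
  show ?thesis
  proof (cases "r = p")
    case True
    then show ?thesis
      using int_similar_trans[OF B_A1 A1_A2] A2p A2r by (metis axis_nth)
  next
    case False
    then obtain A3 where "int_similar A2 A3" and "even_vec (A3 *v (axis p 1 + axis r 1))"
      and "even_vec (transpose A3 *v (axis p 1 + axis r 1))"
      using similar_mod2_kernel_merge_axes[OF _ A2p A2r] by blast
    moreover have "(axis p 1 + axis r 1 :: int ^ 'n) $ p = 1"
      using False by (simp add: axis_def)
    ultimately show ?thesis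
      using int_similar_trans[OF int_similar_trans[OF B_A1 A1_A2]] by blast
  qed
qed

definition parity_kernel :: "int ^ 'n \<Rightarrow> (int ^ 'n) set" where
  "parity_kernel r = {y. even (int_circ r y)}"

lemma int_lattice_subset_parity_kernel:
  assumes "even_vec (transpose A *v w)"
  shows "int_lattice A \<subseteq> parity_kernel w"
  using even_vec_int_circ[OF assms]
  by (auto simp: int_lattice_def parity_kernel_def int_circ_matrix_vector_mult
      simp del: transpose_matrix_vector)

lemma parity_kernel_eqI:
  assumes sub: "parity_kernel r \<subseteq> parity_kernel w" and wk: "odd (w $ k)"
  shows "parity_kernel r = parity_kernel w"
proof -
  have rk: "odd (r $ k)"
  proof
    assume "even (r $ k)"
    then have "axis k 1 \<in> parity_kernel r"
      by (simp add: parity_kernel_def int_circ_axis_right)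
    then have "axis k 1 \<in> parity_kernel w"
      using sub by blast
    then show False
      using wk by (simp add: parity_kernel_def int_circ_axis_right)
  qed
  have "y \<in> parity_kernel r" if "y \<in> parity_kernel w" for y
  proof (rule ccontr)
    assume "y \<notin> parity_kernel r"
    then have "y - axis k 1 \<in> parity_kernel r"
      using rk by (simp add: parity_kernel_def int_circ_diff_right int_circ_axis_right)
    then have "y - axis k 1 \<in> parity_kernel w"
      using sub by blast
    then show False
      using that wk by (simp add: parity_kernel_def int_circ_diff_right int_circ_axis_right)
  qed
  then show ?thesis
    using sub by blast
qed

definition double_coordinate :: "'n \<Rightarrow> int ^ 'n ^ 'n" where
  "double_coordinate p = (\<chi> i j. if i = j then (if i = p then 2 else 1) else 0)"

lemma double_coordinate_mult_vector:
  "(double_coordinate p *v z) $ i = (if i = p then 2 else 1) * z $ i"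
  unfolding double_coordinate_def matrix_vector_mult_def
  by (simp add: if_distrib[of "\<lambda>x. x * z $ _"] cong: if_cong)

lemma matrix_mult_double_coordinate:
  "(N ** double_coordinate p) $ i $ j = N $ i $ j * (if j = p then 2 else 1)"
  unfolding double_coordinate_def matrix_matrix_mult_def
  by (simp add: if_distrib[of "\<lambda>x. N $ i $ _ * x"] cong: if_cong)

lemma det_double_coordinate: "det (double_coordinate p) = 2"
proof -
  have "det (double_coordinate p) = (\<Prod>i\<in>UNIV. if i = p then 2 else 1)"
    by (subst det_diagonal) (auto simp: double_coordinate_def)
  then show ?thesis
    by simp
qed

lemma even_column_factor:
  fixes M :: "int ^ 'n ^ 'n"
  assumes "\<And>i. even (M $ i $ p)"
  shows "M = (\<chi> i j. if j = p then M $ i $ p div 2 else M $ i $ j) ** double_coordinate p"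
  using assms by (simp add: vec_eq_iff matrix_mult_double_coordinate)

lemma int_lattice_mult_invertible:
  assumes "U ** V = mat 1"
  shows "int_lattice (A ** U) = int_lattice A"
proof -
  have "A *v x = (A ** U) *v (V *v x)" for x
    by (metis assms matrix_mul_assoc matrix_mul_rid matrix_vector_mul_assoc)
  then show ?thesis
    by (auto simp: int_lattice_def matrix_vector_mul_assoc[symmetric])
qed

lemma int_lattice_unimodular_double_coordinate:
  assumes "M ** X = mat 1" and "X ** M = mat 1"
  shows "int_lattice (M ** double_coordinate p) = parity_kernel (row p X)"
proof (rule set_eqI)
  fix y
  have "y = (M ** double_coordinate p) *v z \<longleftrightarrow> X *v y = double_coordinate p *v z" for z
  proof
    assume "y = (M ** double_coordinate p) *v z"
    then show "X *v y = double_coordinate p *v z"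
      using assms(2) by (simp add: matrix_vector_mul_assoc matrix_mul_assoc)
  next
    assume "X *v y = double_coordinate p *v z"
    then have "(M ** X) *v y = (M ** double_coordinate p) *v z"
      by (simp flip: matrix_vector_mul_assoc)
    then show "y = (M ** double_coordinate p) *v z"
      using assms(1) by simp
  qed
  then have "y \<in> int_lattice (M ** double_coordinate p) \<longleftrightarrow> (\<exists>z. X *v y = double_coordinate p *v z)"
    by (auto simp: int_lattice_def)
  also have "\<dots> \<longleftrightarrow> even ((X *v y) $ p)"
  proof
    assume "even ((X *v y) $ p)"
    then have "X *v y = double_coordinate p *v (\<chi> i. if i = p then (X *v y) $ p div 2 else (X *v y) $ i)"
      by (simp add: vec_eq_iff double_coordinate_mult_vector)
    then show "\<exists>z. X *v y = double_coordinate p *v z" ..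
  qed (auto simp: double_coordinate_mult_vector)
  also have "\<dots> \<longleftrightarrow> y \<in> parity_kernel (row p X)"
    by (simp add: parity_kernel_def int_circ_def row_def matrix_vector_mult_def)
  finally show "y \<in> int_lattice (M ** double_coordinate p) \<longleftrightarrow> y \<in> parity_kernel (row p X)" .
qed

lemma int_lattice_index_two:
  fixes A :: "int ^ 'n ^ 'n"
  assumes dA: "\<bar>det A\<bar> = 2" and wp: "w $ p = 1" and Aw: "even_vec (A *v w)"
  shows "\<exists>r. int_lattice A = parity_kernel r"
proof -
  \<comment> \<open>A unimodular \<open>U\<close> with \<open>U e\<^sub>p = w\<close> makes column \<open>p\<close> of \<open>A U\<close> even, so that
      \<open>A U = M D\<close> with \<open>D\<close> doubling coordinate \<open>p\<close> and \<open>M\<close> unimodular.\<close>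
  define U where "U = transvection (w - axis p 1) (axis p 1)"
  have "int_circ (axis p 1) (w - axis p 1) = 0"
    using wp by (simp add: int_circ_axis_left)
  then have UV: "U ** transvection (- (w - axis p 1)) (axis p 1) = mat 1"
    unfolding U_def by (rule transvection_inverse)
  have "U *v axis p 1 = w"
    by (simp add: U_def transvection_mult_vector int_circ_axis_left)
  then have "column p (A ** U) = A *v w"
    by (metis matrix_vector_mult_axis matrix_vector_mul_assoc)
  then have "even ((A ** U) $ i $ p)" for i
    using Aw by (metis column_def even_vec_def vec_lambda_beta)
  then obtain M where AU: "A ** U = M ** double_coordinate p"
    using even_column_factor by blast
  have "det U * det (transvection (- (w - axis p 1)) (axis p 1)) = 1"
    using UV by (metis det_I det_mul)
  then have "\<bar>det U\<bar> = 1"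
    by (auto simp: zmult_eq_1_iff)
  moreover have "det A * det U = det M * 2"
    using AU by (metis det_mul det_double_coordinate)
  ultimately have "\<bar>det M\<bar> = 1"
    using dA by (metis abs_mult abs_numeral mult.right_neutral mult_cancel_right2 zero_neq_numeral)
  then obtain X where MX: "M ** X = mat 1" and XM: "X ** M = mat 1"
    using int_matrix_unimodular_inverse by blast
  have "int_lattice A = parity_kernel (row p X)"
    using int_lattice_mult_invertible[OF UV, of A] AU
      int_lattice_unimodular_double_coordinate[OF MX XM] by simp
  then show ?thesis ..
qed

lemma int_lattice_eq_parity_kernel:
  fixes A :: "int ^ 'n ^ 'n"
  assumes "\<bar>det A\<bar> = 2" and "w $ p = 1"
    and "even_vec (A *v w)" and "even_vec (transpose A *v w)"
  shows "int_lattice A = parity_kernel w"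
proof -
  obtain r where r: "int_lattice A = parity_kernel r"
    using int_lattice_index_two assms(1-3) by blast
  have "int_lattice A \<subseteq> parity_kernel w"
    using assms(4) by (rule int_lattice_subset_parity_kernel)
  then show ?thesis
    using r parity_kernel_eqI[of r w p] assms(2) by simp
qed

lemma translate_image_iff:
  fixes c x :: "'a :: ab_group_add"
  shows "x \<in> (\<lambda>y. c + y) ` L \<longleftrightarrow> x - c \<in> L"
  by (auto simp: image_iff intro!: bexI[of _ "x - c"])

lemma reflect_image_iff:
  fixes c x :: "'a :: ab_group_add"
  shows "x \<in> (\<lambda>y. c - y) ` L \<longleftrightarrow> c - x \<in> L"
  by (auto simp: image_iff intro!: bexI[of _ "c - x"])

lemma parity_kernel_cosets:
  assumes "odd (int_circ q l)"
  defines "L \<equiv> parity_kernel q"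
  shows "(UNIV = ((\<lambda>y. l + y) ` L) \<union> L \<and> ((\<lambda>y. l + y) ` L) \<inter> L = {}) \<and>
    ((\<forall>y\<in>L. even (int_circ q y)) \<and> (\<forall>y\<in>(\<lambda>y. l + y) ` L. odd (int_circ q y))) \<and>
    (\<forall>m\<in>L. \<forall>n.
       UNIV = ((\<lambda>y. n - y) ` L) \<union> ((\<lambda>y. l - m - n + y) ` L) \<and>
       ((\<lambda>y. n - y) ` L) \<inter> ((\<lambda>y. l - m - n + y) ` L) = {}) \<and>
    (\<forall>m\<in>(\<lambda>y. l + y) ` L. \<forall>n. (\<lambda>y. n - y) ` L = (\<lambda>y. l - m - n + y) ` L)"
  using assms unfolding set_eq_iff
  by (simp add: translate_image_iff reflect_image_iff parity_kernel_def
      int_circ_add_right int_circ_diff_right) blast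

theorem theorem4p1:
  fixes B :: "int ^ 'n ^ 'n"
  assumes "\<bar>det B\<bar> = 2"
  shows "\<exists>(A :: int ^ 'n ^ 'n) (l :: int ^ 'n) (q :: int ^ 'n).
    int_similar B A \<and>
    int_lattice A = int_lattice (transpose A) \<and>
    (UNIV = ((\<lambda>y. l + y) ` int_lattice A) \<union> int_lattice A \<and>
       ((\<lambda>y. l + y) ` int_lattice A) \<inter> int_lattice A = {}) \<and>
    ((\<forall>y\<in>int_lattice A. even (int_circ q y)) \<and>
       (\<forall>y\<in>(\<lambda>y. l + y) ` int_lattice A. odd (int_circ q y))) \<and>
    (\<forall>m\<in>int_lattice A. \<forall>n :: int ^ 'n.
       UNIV = ((\<lambda>y. n - y) ` int_lattice A) \<union> ((\<lambda>y. l - m - n + y) ` int_lattice A) \<and>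
       ((\<lambda>y. n - y) ` int_lattice A) \<inter> ((\<lambda>y. l - m - n + y) ` int_lattice A) = {}) \<and>
    (\<forall>m\<in>(\<lambda>y. l + y) ` int_lattice A. \<forall>n :: int ^ 'n.
       (\<lambda>y. n - y) ` int_lattice A = (\<lambda>y. l - m - n + y) ` int_lattice A)"
proof -
  obtain A w p where BA: "int_similar B A" and wp: "w $ p = 1"
    and Aw: "even_vec (A *v w)" and ATw: "even_vec (transpose A *v w)"
    using similar_common_mod2_kernel[OF assms] by blast
  have dA: "\<bar>det A\<bar> = 2" and dAT: "\<bar>det (transpose A)\<bar> = 2"
    using assms int_similar_det[OF BA] by simp_all
  have "int_lattice A = parity_kernel w"
    using int_lattice_eq_parity_kernel[OF dA wp Aw ATw] .
  moreover have "int_lattice (transpose A) = parity_kernel w"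
    using int_lattice_eq_parity_kernel[OF dAT wp] ATw Aw by simp
  moreover have "odd (int_circ w (axis p 1))"
    using wp by (simp add: int_circ_axis_right)
  ultimately show ?thesis
    using BA parity_kernel_cosets by metis
qed

end
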